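(* Let $(m,q,d,\tau)$ be suitable parameters and let $\rho=f,X_1,\dots,X_m$ where $f:\Omega\to\mathbb F_q^{d+1}$ is a bijection, $X_1,\dots,X_m$ form a partition of $\mathbb F_q^d$ and $|X_k|=\tau_{B_k}$ for all $k$. Then for every transversal hyperplane $V$ of $\mathbb F_q^{d+1}$, $N(V,\rho)$ is a deal of distribution type $\tau$ and $(N(V,\rho),\rho)$ is an execution of the shifted projection protocol.
   Context: Agents $\mathcal A=\{A,B_1,\dots,B_m\}$ speak in order $A,B_1,\dots,B_m$. A distribution type is a vector $\tau=(\tau_P)_{P\in\mathcal A}$ of positive integers, $|\tau|=\sum_P\tau_P$; the deck $\Omega$ has $|\tau|$ cards; a deal of type $\tau$ is a partition $H=(H_P)_P$ of $\Omega$ with $|H_P|=\tau_P$. Suitable parameters: $m>1$, $q>m$ a prime power, $d>0$, $|\tau|=q^{d+1}$, $\tau_A=q^{d+1}-q^d$, $\tau_{B_k}>q^{d-1}$ for each $k$. A transversal hyperplane $V\subseteq\mathbb F_q^{d+1}$ is $\{x: x_{d+1}=a_1x_1+\dots+a_dx_d+b\}$; $\sigma(V)=(a_1,\dots,a_d)$; $\pi$ projects onto the first $d$ coordinates, $\pi|_V$ is a bijection onto $\mathbb F_q^d$ with inverse $\iota_V$; $\pi^V_\downarrow(w)=\pi(w)+\sigma(V)$ for $w\in V$ and $\pi^V_\uparrow(y)=\iota_V(y-\sigma(V))$ for $y\in\mathbb F_q^d$. $N(V,\rho)$ is defined by $N(V,\rho)_A=f^{-1}[\mathbb F_q^{d+1}\setminus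 V]$ and $N(V,\rho)_{B_k}=f^{-1}[\pi^V_\uparrow[X_k]]$ for $k\in[1,m]$. Shifted projection protocol: maximal executions for deal $H$ are $(H,f,X_1,\dots,X_m)$ with $f:\Omega\to\mathbb F_q^{d+1}$ a bijection such that $V=\mathbb F_q^{d+1}\setminus f[H_A]$ is a transversal hyperplane and $X_k=\pi^V_\downarrow[f[H_{B_k}]]$; $\Pi(H,\rho)$ is the set of tokens $a$ with $(H,\rho*a)$ an initial segment of a maximal execution; an execution is $(H,a_0,\dots,a_n)$ with $a_k\in\Pi(H,a_0,\dots,a_{k-1})$ for all $k$. *)

theory Defs
  imports Main "HOL-Computational_Algebra.Primes" "HOL-Library.Sublist"
begin

text \<open>Agents are indexed by naturals: 0 is A, k (1 \<le> k \<le> m) is B_k.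
A distribution type is tau :: nat \<Rightarrow> nat (only values at 0..m matter).
The field F_q is a finite field type 'q with CARD('q) = q.
Vectors of F_q^n are functions nat \<Rightarrow> 'q vanishing from index n on; the paper's
coordinate x_i is index i-1, so x_(d+1) is index d.\<close>

definition vecs :: "nat \<Rightarrow> (nat \<Rightarrow> 'q::field) set" where
  "vecs n = {x. \<forall>i\<ge>n. x i = 0}"

definition hyp :: "nat \<Rightarrow> (nat \<Rightarrow> 'q::field) \<Rightarrow> 'q \<Rightarrow> (nat \<Rightarrow> 'q) set" where
  "hyp d a b = {x \<in> vecs (Suc d). x d = (\<Sum>i<d. a i * x i) + b}"

definition transversal :: "nat \<Rightarrow> (nat \<Rightarrow> 'q::field) set \<Rightarrow> bool" where
  "transversal d V \<longleftrightarrow> (\<exists>a\<in>vecs d. \<exists>b. V = hyp d a b)"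

definition sigma :: "nat \<Rightarrow> (nat \<Rightarrow> 'q::field) set \<Rightarrow> (nat \<Rightarrow> 'q)" where
  "sigma d V = (THE a. a \<in> vecs d \<and> (\<exists>b. V = hyp d a b))"

definition proj :: "nat \<Rightarrow> (nat \<Rightarrow> 'q::field) \<Rightarrow> (nat \<Rightarrow> 'q)" where
  "proj d x = (\<lambda>i. if i < d then x i else 0)"

definition iota :: "nat \<Rightarrow> (nat \<Rightarrow> 'q::field) set \<Rightarrow> (nat \<Rightarrow> 'q) \<Rightarrow> (nat \<Rightarrow> 'q)" where
  "iota d V y = (THE w. w \<in> V \<and> proj d w = y)"

definition pi_down :: "nat \<Rightarrow> (nat \<Rightarrow> 'q::field) set \<Rightarrow> (nat \<Rightarrow> 'q) \<Rightarrow> (nat \<Rightarrow> 'q)" where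
  "pi_down d V w = (\<lambda>i. proj d w i + sigma d V i)"

definition pi_up :: "nat \<Rightarrow> (nat \<Rightarrow> 'q::field) set \<Rightarrow> (nat \<Rightarrow> 'q) \<Rightarrow> (nat \<Rightarrow> 'q)" where
  "pi_up d V y = iota d V (\<lambda>i. y i - sigma d V i)"

definition is_deal :: "'c set \<Rightarrow> nat \<Rightarrow> (nat \<Rightarrow> nat) \<Rightarrow> (nat \<Rightarrow> 'c set) \<Rightarrow> bool" where
  "is_deal \<Omega> m tau H \<longleftrightarrow>
     (\<forall>P\<le>m. H P \<subseteq> \<Omega> \<and> finite (H P) \<and> card (H P) = tau P) \<and>
     (\<forall>P\<le>m. \<forall>Q\<le>m. P \<noteq> Q \<longrightarrow> H P \<inter> H Q = {}) \<and>
     (\<Union>P\<in>{..m}. H P) = \<Omega>"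

definition suitable :: "nat \<Rightarrow> nat \<Rightarrow> nat \<Rightarrow> (nat \<Rightarrow> nat) \<Rightarrow> bool" where
  "suitable m q d tau \<longleftrightarrow>
     m > 1 \<and> q > m \<and> (\<exists>p k. prime (p::nat) \<and> k > 0 \<and> q = p ^ k) \<and> d > 0 \<and>
     (\<forall>P\<le>m. tau P > 0) \<and>
     (\<Sum>P\<le>m. tau P) = q ^ (Suc d) \<and>
     tau 0 = q ^ (Suc d) - q ^ d \<and>
     (\<forall>k\<in>{1..m}. tau k > q ^ (d - 1))"

datatype ('c, 'q) token = TokF "'c \<Rightarrow> nat \<Rightarrow> 'q" | TokX "(nat \<Rightarrow> 'q) set"

definition max_exec :: "'c set \<Rightarrow> nat \<Rightarrow> nat \<Rightarrow> (nat \<Rightarrow> nat) \<Rightarrow> (nat \<Rightarrow> 'c set)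
    \<Rightarrow> ('c, 'q::field) token list \<Rightarrow> bool" where
  "max_exec \<Omega> m d tau H toks \<longleftrightarrow> is_deal \<Omega> m tau H \<and>
     (\<exists>f X. toks = TokF f # map (\<lambda>k. TokX (X k)) [1..<Suc m] \<and>
        bij_betw f \<Omega> (vecs (Suc d)) \<and>
        transversal d (vecs (Suc d) - f ` H 0) \<and>
        (\<forall>k\<in>{1..m}. X k = pi_down d (vecs (Suc d) - f ` H 0) ` f ` H k))"

definition Pi_tok :: "'c set \<Rightarrow> nat \<Rightarrow> nat \<Rightarrow> (nat \<Rightarrow> nat) \<Rightarrow> (nat \<Rightarrow> 'c set)
    \<Rightarrow> ('c, 'q::field) token list \<Rightarrow> ('c, 'q) token set" where
  "Pi_tok \<Omega> m d tau H rho =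
     {a. \<exists>e. max_exec \<Omega> m d tau H e \<and> prefix (rho @ [a]) e}"

definition is_execution :: "'c set \<Rightarrow> nat \<Rightarrow> nat \<Rightarrow> (nat \<Rightarrow> nat) \<Rightarrow> (nat \<Rightarrow> 'c set)
    \<Rightarrow> ('c, 'q::field) token list \<Rightarrow> bool" where
  "is_execution \<Omega> m d tau H toks \<longleftrightarrow>
     (\<forall>k<length toks. toks ! k \<in> Pi_tok \<Omega> m d tau H (take k toks))"

definition N :: "'c set \<Rightarrow> nat \<Rightarrow> (nat \<Rightarrow> 'q::field) set \<Rightarrow> ('c \<Rightarrow> nat \<Rightarrow> 'q)
    \<Rightarrow> (nat \<Rightarrow> (nat \<Rightarrow> 'q) set) \<Rightarrow> nat \<Rightarrow> 'c set" where
  "N \<Omega> d V f X P =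
     (if P = 0 then {c \<in> \<Omega>. f c \<in> vecs (Suc d) - V}
      else {c \<in> \<Omega>. f c \<in> pi_up d V ` X P})"

end

theory Submission
  imports Defs
begin

text \<open>A transversal hyperplane is the graph of an affine function on \<open>\<FF>\<^sub>q\<^sup>d\<close>, so the shifted
lift \<open>\<pi>\<^sup>V\<^sub>\<up>\<close> is a bijection from \<open>\<FF>\<^sub>q\<^sup>d\<close> onto \<open>V\<close> with inverse \<open>\<pi>\<^sup>V\<^sub>\<down>\<close>. Hence the sets
\<open>\<FF>\<^sub>q\<^sup>d\<^sup>+\<^sup>1 \<setminus> V\<close> and \<open>\<pi>\<^sup>V\<^sub>\<up>[X\<^sub>k]\<close> partition \<open>\<FF>\<^sub>q\<^sup>d\<^sup>+\<^sup>1\<close> with the prescribed sizes, and their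
preimages under the bijection \<open>f\<close> form a deal \<open>N(V,\<rho>)\<close>. For this deal, \<open>\<rho>\<close> is itself a maximal
execution: the complement of \<open>f[N(V,\<rho>)\<^sub>A]\<close> is \<open>V\<close> again and \<open>\<pi>\<^sup>V\<^sub>\<down>\<close> undoes \<open>\<pi>\<^sup>V\<^sub>\<up>\<close>.
Every maximal execution is an execution, since each of its prefixes extends to it.\<close>

lemma hyp_subset_vecs: "hyp d a b \<subseteq> vecs (Suc d)"
  by (auto simp: hyp_def)

lemma hyp_eq_imp_coeffs_eq:
  fixes a a' :: "nat \<Rightarrow> 'q::field"
  assumes a: "a \<in> vecs d" and a': "a' \<in> vecs d" and eq: "hyp d a b = hyp d a' b'"
  shows "a = a'"
proof
  fix j
  have "(\<lambda>i. if i = d then b else 0) \<in> hyp d a b"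
    by (auto simp: hyp_def vecs_def)
  hence "(\<lambda>i. if i = d then b else 0) \<in> hyp d a' b'" using eq by simp
  hence "b = b'" by (simp add: hyp_def)
  show "a j = a' j"
  proof (cases "j < d")
    case True
    let ?x = "\<lambda>i. if i = j then 1 else if i = d then a j + b else (0::'q)"
    have sum_x: "(\<Sum>i<d. c i * ?x i) = c j" for c :: "nat \<Rightarrow> 'q"
    proof -
      have "(\<Sum>i<d. c i * ?x i) = (\<Sum>i<d. if i = j then c i else 0)"
        by (rule sum.cong) auto
      thus ?thesis using True by simp
    qed
    have "?x \<in> hyp d a b" using True by (auto simp: hyp_def vecs_def sum_x)
    hence "?x \<in> hyp d a' b'" using eq by blast
    hence "a j + b = a' j + b'" using True by (auto simp: hyp_def sum_x)
    thus ?thesis using \<open>b = b'\<close> by simp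
  next
    case False
    thus ?thesis using a a' by (auto simp: vecs_def)
  qed
qed

lemma sigma_hyp: "a \<in> vecs d \<Longrightarrow> sigma d (hyp d a b) = a"
  unfolding sigma_def by (rule the_equality) (use hyp_eq_imp_coeffs_eq in blast)+

lemma sigma_in_vecs: "transversal d V \<Longrightarrow> sigma d V \<in> vecs d"
  by (auto simp: transversal_def sigma_hyp)

lemma proj_in_vecs: "proj d w \<in> vecs d"
  by (auto simp: proj_def vecs_def)

lemma hyp_eq_if_proj_eq:
  assumes w: "w \<in> hyp d a b" and w': "w' \<in> hyp d a b" and eq: "proj d w = proj d w'"
  shows "w = w'"
proof
  fix i
  have below: "w j = w' j" if "j < d" for j
    using eq that by (metis proj_def)
  hence "(\<Sum>j<d. a j * w j) = (\<Sum>j<d. a j * w' j)" by simp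
  with below w w' show "w i = w' i"
    by (cases i d rule: linorder_cases) (auto simp: hyp_def vecs_def)
qed

lemma hyp_proj_ex1:
  assumes "y \<in> vecs d"
  shows "\<exists>!w. w \<in> hyp d a b \<and> proj d w = y"
proof -
  let ?w = "y(d := (\<Sum>i<d. a i * y i) + b)"
  have "(\<Sum>i<d. a i * ?w i) = (\<Sum>i<d. a i * y i)" by simp
  hence "?w \<in> hyp d a b \<and> proj d ?w = y"
    using assms by (auto simp: hyp_def vecs_def proj_def)
  thus ?thesis using hyp_eq_if_proj_eq by blast
qed

lemma iota_hyp:
  assumes "y \<in> vecs d"
  shows "iota d (hyp d a b) y \<in> hyp d a b" "proj d (iota d (hyp d a b) y) = y"
  using theI'[OF hyp_proj_ex1[OF assms, of a b]] by (simp_all add: iota_def)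

lemma iota_hyp_proj: "w \<in> hyp d a b \<Longrightarrow> iota d (hyp d a b) (proj d w) = w"
  unfolding iota_def by (rule the1_equality[OF hyp_proj_ex1[OF proj_in_vecs]]) simp

lemma
  assumes V: "transversal d V" and y: "y \<in> vecs d"
  shows pi_up_in: "pi_up d V y \<in> V"
    and pi_down_pi_up: "pi_down d V (pi_up d V y) = y"
proof -
  obtain a b where a: "a \<in> vecs d" and Vh: "V = hyp d a b"
    using V by (auto simp: transversal_def)
  have "(\<lambda>i. y i - a i) \<in> vecs d" using a y by (auto simp: vecs_def)
  with Vh show "pi_up d V y \<in> V" "pi_down d V (pi_up d V y) = y"
    by (simp_all add: pi_up_def pi_down_def sigma_hyp[OF a] iota_hyp)
qed

lemma pi_up_pi_down:
  assumes V: "transversal d V" and w: "w \<in> V"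
  shows "pi_up d V (pi_down d V w) = w"
proof -
  obtain a b where a: "a \<in> vecs d" and Vh: "V = hyp d a b"
    using V by (auto simp: transversal_def)
  show ?thesis
    using iota_hyp_proj[of w d a b] w Vh by (simp add: pi_up_def pi_down_def sigma_hyp[OF a])
qed

lemma pi_down_in_vecs: "transversal d V \<Longrightarrow> pi_down d V w \<in> vecs d"
  using sigma_in_vecs[of d V] proj_in_vecs[of d w] by (auto simp: pi_down_def vecs_def)

lemma bij_betw_pi_up: "transversal d V \<Longrightarrow> bij_betw (pi_up d V) (vecs d) V"
  by (rule bij_betw_byWitness[where f' = "pi_down d V"])
     (auto simp: pi_up_in pi_down_pi_up pi_up_pi_down pi_down_in_vecs)

lemma image_preimage_bij_betw:
  "bij_betw f \<Omega> W \<Longrightarrow> S \<subseteq> W \<Longrightarrow> f ` {c \<in> \<Omega>. f c \<in> S} = S"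
  unfolding bij_betw_def by blast

lemma card_preimage_bij_betw:
  assumes "bij_betw f \<Omega> W" "S \<subseteq> W"
  shows "card {c \<in> \<Omega>. f c \<in> S} = card S"
proof -
  have "inj_on f {c \<in> \<Omega>. f c \<in> S}"
    using assms(1) by (auto simp: bij_betw_def intro: inj_on_subset)
  thus ?thesis using card_image image_preimage_bij_betw[OF assms] by metis
qed

lemma is_deal_preimage:
  assumes f: "bij_betw f \<Omega> W" and \<Omega>: "finite \<Omega>"
    and sub: "\<forall>P\<le>m. S P \<subseteq> W" and card: "\<forall>P\<le>m. card (S P) = tau P"
    and disj: "\<forall>P\<le>m. \<forall>Q\<le>m. P \<noteq> Q \<longrightarrow> S P \<inter> S Q = {}"
    and cover: "(\<Union>P\<in>{..m}. S P) = W"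
  shows "is_deal \<Omega> m tau (\<lambda>P. {c \<in> \<Omega>. f c \<in> S P})"
  unfolding is_deal_def
proof (intro conjI allI impI)
  fix P assume "P \<le> m"
  then show "card {c \<in> \<Omega>. f c \<in> S P} = tau P"
    using card_preimage_bij_betw[OF f] sub card by simp
  show "{c \<in> \<Omega>. f c \<in> S P} \<subseteq> \<Omega>" "finite {c \<in> \<Omega>. f c \<in> S P}"
    using \<Omega> by auto
next
  fix P Q assume "P \<le> m" "Q \<le> m" "P \<noteq> Q"
  then show "{c \<in> \<Omega>. f c \<in> S P} \<inter> {c \<in> \<Omega>. f c \<in> S Q} = {}"
    using disj by blast
next
  show "(\<Union>P\<in>{..m}. {c \<in> \<Omega>. f c \<in> S P}) = \<Omega>"
    using f cover by (auto simp: bij_betw_def)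
qed

lemma card_Diff_bij_betw:
  assumes f: "bij_betw f \<Omega> W" and "finite \<Omega>" and g: "bij_betw g A V" and VW: "V \<subseteq> W"
  shows "card (W - V) = card \<Omega> - card A"
proof -
  have "finite V" using f VW \<open>finite \<Omega>\<close> bij_betw_finite finite_subset by metis
  moreover have "card W = card \<Omega>" "card V = card A"
    using f g bij_betw_same_card by metis+
  ultimately show ?thesis using card_Diff_subset[OF _ VW] by simp
qed

lemma is_deal_preimage_complement_image:
  assumes f: "bij_betw f \<Omega> W" and \<Omega>: "finite \<Omega>" "card \<Omega> = (\<Sum>P\<le>m. tau P)"
    and g: "bij_betw g A V" and VW: "V \<subseteq> W"
    and Xsub: "\<forall>k\<in>{1..m}. X k \<subseteq> A"
    and Xdisj: "\<forall>k\<in>{1..m}. \<forall>l\<in>{1..m}. k \<noteq> l \<longrightarrow> X k \<inter> X l = {}"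
    and Xcover: "(\<Union>k\<in>{1..m}. X k) = A"
    and Xcard: "\<forall>k\<in>{1..m}. card (X k) = tau k"
  shows "is_deal \<Omega> m tau (\<lambda>P. {c \<in> \<Omega>. f c \<in> (if P = 0 then W - V else g ` X P)})"
proof (rule is_deal_preimage[OF f \<Omega>(1)])
  let ?S = "\<lambda>P. if P = 0 then W - V else g ` X P"
  have inj: "inj_on g A" and gA: "g ` A = V" using g by (auto simp: bij_betw_def)
  have "finite A" using f g VW \<Omega>(1) bij_betw_finite finite_subset by metis
  then have "card A = (\<Sum>k\<in>{1..m}. card (X k))"
    unfolding Xcover[symmetric]
    by (intro card_UN_disjoint) (use Xsub Xdisj in \<open>auto intro: finite_subset\<close>)
  moreover have "(\<Sum>P\<le>m. tau P) = tau 0 + (\<Sum>k\<in>{1..m}. tau k)"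
    by (simp add: atMost_atLeast0 sum.atLeast_Suc_atMost)
  ultimately have "card (W - V) = tau 0"
    using card_Diff_bij_betw[OF f \<Omega>(1) g VW] \<Omega>(2) Xcard by simp
  moreover have "card (g ` X k) = tau k" if "k \<in> {1..m}" for k
    using card_image[OF inj_on_subset[OF inj]] Xsub Xcard that by metis
  ultimately show "\<forall>P\<le>m. card (?S P) = tau P" by auto
  have gX_V: "g ` X k \<subseteq> V" if "k \<in> {1..m}" for k
    using Xsub gA that by blast
  show "\<forall>P\<le>m. ?S P \<subseteq> W"
  proof (intro allI impI)
    fix P assume "P \<le> m"
    then show "?S P \<subseteq> W" using gX_V[of P] VW by (cases "P = 0") auto
  qed
  show "\<forall>P\<le>m. \<forall>Q\<le>m. P \<noteq> Q \<longrightarrow> ?S P \<inter> ?S Q = {}"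
  proof (intro allI impI)
    fix P Q assume P: "P \<le> m" and Q: "Q \<le> m" and "P \<noteq> Q"
    show "?S P \<inter> ?S Q = {}"
    proof (cases "P = 0 \<or> Q = 0")
      case True
      with \<open>P \<noteq> Q\<close> P Q gX_V[of P] gX_V[of Q] show ?thesis by (auto simp: image_subset_iff)
    next
      case False
      with P Q have "P \<in> {1..m}" "Q \<in> {1..m}" by auto
      then have "g ` X P \<inter> g ` X Q = g ` (X P \<inter> X Q)"
        using inj_on_image_Int[OF inj] Xsub by blast
      with False Xdisj \<open>P \<in> {1..m}\<close> \<open>Q \<in> {1..m}\<close> \<open>P \<noteq> Q\<close> show ?thesis by auto
    qed
  qed
  have "(\<Union>k\<in>{1..m}. g ` X k) = V" using Xcover gA by blast
  moreover have "{..m} = insert 0 {1..m}" by auto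
  ultimately show "(\<Union>P\<in>{..m}. ?S P) = W" using VW by auto
qed

lemma max_exec_imp_is_execution:
  assumes "max_exec \<Omega> m d tau H toks"
  shows "is_execution \<Omega> m d tau H toks"
  unfolding is_execution_def Pi_tok_def
proof (intro allI impI CollectI exI conjI)
  fix k assume "k < length toks"
  hence "take k toks @ [toks ! k] = take (Suc k) toks" by (simp add: take_Suc_conv_app_nth)
  thus "prefix (take k toks @ [toks ! k]) toks" by (simp add: take_is_prefix)
qed (rule assms)

theorem mainTheorem10:
  fixes \<Omega> :: "'c set" and m d :: nat and tau :: "nat \<Rightarrow> nat"
    and f :: "'c \<Rightarrow> nat \<Rightarrow> 'q::{finite,field}"
    and X :: "nat \<Rightarrow> (nat \<Rightarrow> 'q) set"
    and V :: "(nat \<Rightarrow> 'q) set"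
  assumes suit: "suitable m (card (UNIV :: 'q set)) d tau"
    and deck: "finite \<Omega>" "card \<Omega> = (\<Sum>P\<le>m. tau P)"
    and fbij: "bij_betw f \<Omega> (vecs (Suc d))"
    and Xsub: "\<forall>k\<in>{1..m}. X k \<subseteq> vecs d"
    and Xdisj: "\<forall>k\<in>{1..m}. \<forall>l\<in>{1..m}. k \<noteq> l \<longrightarrow> X k \<inter> X l = {}"
    and Xcover: "(\<Union>k\<in>{1..m}. X k) = vecs d"
    and Xcard: "\<forall>k\<in>{1..m}. card (X k) = tau k"
    and V: "transversal d V"
  shows "is_deal \<Omega> m tau (N \<Omega> d V f X) \<and>
         is_execution \<Omega> m d tau (N \<Omega> d V f X) (TokF f # map (\<lambda>k. TokX (X k)) [1..<Suc m])"
proof -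
  let ?S = "\<lambda>P. if P = 0 then vecs (Suc d) - V else pi_up d V ` X P"
  have N_eq: "N \<Omega> d V f X = (\<lambda>P. {c \<in> \<Omega>. f c \<in> ?S P})"
    by (rule ext) (auto simp: N_def)
  have VW: "V \<subseteq> vecs (Suc d)"
    using V hyp_subset_vecs by (auto simp: transversal_def)
  have deal: "is_deal \<Omega> m tau (N \<Omega> d V f X)"
    unfolding N_eq
    by (rule is_deal_preimage_complement_image[OF fbij deck bij_betw_pi_up[OF V] VW
          Xsub Xdisj Xcover Xcard])
  have V_eq: "vecs (Suc d) - f ` N \<Omega> d V f X 0 = V"
    using image_preimage_bij_betw[OF fbij, of "vecs (Suc d) - V"] VW unfolding N_eq by auto
  have X_eq: "X k = pi_down d V ` f ` N \<Omega> d V f X k" if k: "k \<in> {1..m}" for k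
  proof -
    have "pi_up d V ` X k \<subseteq> vecs (Suc d)"
      using pi_up_in[OF V] Xsub VW k by blast
    hence "f ` N \<Omega> d V f X k = pi_up d V ` X k"
      using image_preimage_bij_betw[OF fbij] k unfolding N_eq by simp
    moreover have "pi_down d V ` pi_up d V ` X k = X k"
      using pi_down_pi_up[OF V] Xsub k by (force simp: image_image)
    ultimately show ?thesis by simp
  qed
  have "max_exec \<Omega> m d tau (N \<Omega> d V f X) (TokF f # map (\<lambda>k. TokX (X k)) [1..<Suc m])"
    unfolding max_exec_def using deal fbij V V_eq X_eq by auto
  with deal show ?thesis by (simp add: max_exec_imp_is_execution)
qed

end
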